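(* Let $N\ge2$, $\tilde m\in(0,1)^N$ with entries summing to $1$, $\mathbb{U}=\{X\in\mathbb{R}^{N\times 3}\mid \tilde m^\top X=\mathbf{0}^\top\}$, $m=3(N-1)$, $\varphi:\mathbb{R}^m\to\mathbb{U}$ a linear isometric isomorphism, $\mathbb{T}\subseteq\mathrm{O}(3)$, and $\mathbb{P}$ the set of $N\times N$ permutation matrices mapping $\mathbb{U}$ into itself. Let $\hat\varepsilon^\varphi_\theta:\mathbb{U}\times\mathbb{R}^{N\times d}\times\{0,\dots,T\}\to\mathbb{U}$ be a function (the denoiser) such that for every $R\in\mathbb{T}$ and $\Pi\in\mathbb{P}$, $$\hat\varepsilon^\varphi_\theta(\Pi XR^\top,\Pi C,t)=\Pi\,\hat\varepsilon^\varphi_\theta(X,C,t)\,R^\top\quad\text{for all }X\in\mathbb{U},\ C\in\mathbb{R}^{N\times d},\ t.$$ Then the transitions $p_\theta(z_{t-1}\mid z_t,C)$ ($1\le t\le T$) and $p_\theta(x\mid z_0,C)$ of the associated diffusion model are $(\mathbb{T},\mathbb{P})$-equivariant.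
   Context: Noise schedule: $\alpha_t\in(0,1)$ for $t=0,\dots,T$, $\sigma_t^2=1-\alpha_t^2$, $\alpha_{-1}=1$, $\tilde\alpha_t=\alpha_t/\alpha_{t-1}$, $\tilde\sigma_t^2=\sigma_t^2-\tilde\alpha_t^2\sigma_{t-1}^2$. The denoiser on $\mathbb{R}^m$ is $\hat\varepsilon_\theta(u,C,t)=\varphi^{-1}(\hat\varepsilon^\varphi_\theta(\varphi(u),C,t))$, and $\hat x_\theta(u,C,t)=\frac{1}{\alpha_t}u-\frac{\sigma_t}{\alpha_t}\hat\varepsilon_\theta(u,C,t)$. The transitions are $p_\theta(x\mid z_0,C)=\mathcal{N}(x;\hat x_\theta(z_0,C,0),\alpha_0^2\sigma_0^{-2}I_m)$ and, for $t\ge1$, $p_\theta(z_{t-1}\mid z_t,C)=\mathcal{N}\big(z_{t-1};\frac{\tilde\alpha_t\sigma_{t-1}^2}{\sigma_t^2}z_t+\frac{\alpha_{t-1}\tilde\sigma_t^2}{\sigma_t^2}\hat x_\theta(z_t,C,t),\frac{\tilde\sigma_t^2\sigma_{t-1}^2}{\sigma_t^2}I_m\big)$. For $R\in\mathbb{T}$ and $\Pi\in\mathbb{P}$ define $\lambda(u)=\varphi^{-1}(\Pi\varphi(u)R^\top)$. A conditional density $p(\cdot\mid\cdot,\cdot):\mathbb{R}^m\times\mathbb{R}^m\times\mathbb{R}^{N\times d}\to\mathbb{R}$ is $(\mathbb{T},\mathbb{P})$-equivariant if $p(\lambda(u)\mid\lambda(u'),\Pi C)=p(u\mid u',C)$ for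 all $R\in\mathbb{T}$, $\Pi\in\mathbb{P}$, $u,u'\in\mathbb{R}^m$, $C\in\mathbb{R}^{N\times d}$. *)

theory Defs
  imports "HOL-Analysis.Analysis"
begin

definition centred_space :: "real ^ 'n \<Rightarrow> (real ^ 3 ^ 'n) set" where
  "centred_space mt = {X. \<forall>j. (\<Sum>i\<in>UNIV. mt $ i * X $ i $ j) = 0}"

definition permutation_matrix :: "real ^ 'n ^ 'n \<Rightarrow> bool" where
  "permutation_matrix P \<longleftrightarrow>
     (\<exists>p. p permutes (UNIV :: 'n set) \<and> P = (\<chi> i j. if p i = j then 1 else 0))"

definition perm_set :: "real ^ 'n \<Rightarrow> (real ^ 'n ^ 'n) set" where
  "perm_set mt = {P. permutation_matrix P \<and> (\<forall>X \<in> centred_space mt. P ** X \<in> centred_space mt)}"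

definition gauss_dens :: "real \<Rightarrow> 'a::euclidean_space \<Rightarrow> 'a \<Rightarrow> real" where
  "gauss_dens v mu x =
     (2 * pi * v) powr (- (real DIM('a)) / 2) * exp (- (norm (x - mu))\<^sup>2 / (2 * v))"

text \<open>Noise schedule, with alpha_{-1} = 1 (so sigma_{-1} = 0).\<close>
definition alpha_prev :: "(nat \<Rightarrow> real) \<Rightarrow> nat \<Rightarrow> real" where
  "alpha_prev \<alpha> t = (if t = 0 then 1 else \<alpha> (t - 1))"

definition sig2 :: "(nat \<Rightarrow> real) \<Rightarrow> nat \<Rightarrow> real" where
  "sig2 \<alpha> t = 1 - (\<alpha> t)\<^sup>2"

definition sig :: "(nat \<Rightarrow> real) \<Rightarrow> nat \<Rightarrow> real" where
  "sig \<alpha> t = sqrt (sig2 \<alpha> t)"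

definition sig2_prev :: "(nat \<Rightarrow> real) \<Rightarrow> nat \<Rightarrow> real" where
  "sig2_prev \<alpha> t = 1 - (alpha_prev \<alpha> t)\<^sup>2"

definition alpha_tilde :: "(nat \<Rightarrow> real) \<Rightarrow> nat \<Rightarrow> real" where
  "alpha_tilde \<alpha> t = \<alpha> t / alpha_prev \<alpha> t"

definition sig2_tilde :: "(nat \<Rightarrow> real) \<Rightarrow> nat \<Rightarrow> real" where
  "sig2_tilde \<alpha> t = sig2 \<alpha> t - (alpha_tilde \<alpha> t)\<^sup>2 * sig2_prev \<alpha> t"

definition eps_m ::
  "('m::euclidean_space \<Rightarrow> real ^ 3 ^ 'n) \<Rightarrow>
   (real ^ 3 ^ 'n \<Rightarrow> real ^ 'd ^ 'n \<Rightarrow> nat \<Rightarrow> real ^ 3 ^ 'n) \<Rightarrow>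
   'm \<Rightarrow> real ^ 'd ^ 'n \<Rightarrow> nat \<Rightarrow> 'm" where
  "eps_m \<phi> epsphi u C t = inv_into UNIV \<phi> (epsphi (\<phi> u) C t)"

definition xhat ::
  "(nat \<Rightarrow> real) \<Rightarrow> ('m::euclidean_space \<Rightarrow> real ^ 3 ^ 'n) \<Rightarrow>
   (real ^ 3 ^ 'n \<Rightarrow> real ^ 'd ^ 'n \<Rightarrow> nat \<Rightarrow> real ^ 3 ^ 'n) \<Rightarrow>
   'm \<Rightarrow> real ^ 'd ^ 'n \<Rightarrow> nat \<Rightarrow> 'm" where
  "xhat \<alpha> \<phi> epsphi u C t =
     (1 / \<alpha> t) *\<^sub>R u - (sig \<alpha> t / \<alpha> t) *\<^sub>R eps_m \<phi> epsphi u C t"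

definition p_final ::
  "(nat \<Rightarrow> real) \<Rightarrow> ('m::euclidean_space \<Rightarrow> real ^ 3 ^ 'n) \<Rightarrow>
   (real ^ 3 ^ 'n \<Rightarrow> real ^ 'd ^ 'n \<Rightarrow> nat \<Rightarrow> real ^ 3 ^ 'n) \<Rightarrow>
   'm \<Rightarrow> 'm \<Rightarrow> real ^ 'd ^ 'n \<Rightarrow> real" where
  "p_final \<alpha> \<phi> epsphi x z0 C =
     gauss_dens ((\<alpha> 0)\<^sup>2 / sig2 \<alpha> 0) (xhat \<alpha> \<phi> epsphi z0 C 0) x"

definition p_trans ::
  "(nat \<Rightarrow> real) \<Rightarrow> ('m::euclidean_space \<Rightarrow> real ^ 3 ^ 'n) \<Rightarrow>
   (real ^ 3 ^ 'n \<Rightarrow> real ^ 'd ^ 'n \<Rightarrow> nat \<Rightarrow> real ^ 3 ^ 'n) \<Rightarrow>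
   nat \<Rightarrow> 'm \<Rightarrow> 'm \<Rightarrow> real ^ 'd ^ 'n \<Rightarrow> real" where
  "p_trans \<alpha> \<phi> epsphi t zprev zt C =
     gauss_dens (sig2_tilde \<alpha> t * sig2_prev \<alpha> t / sig2 \<alpha> t)
       ((alpha_tilde \<alpha> t * sig2_prev \<alpha> t / sig2 \<alpha> t) *\<^sub>R zt
        + (alpha_prev \<alpha> t * sig2_tilde \<alpha> t / sig2 \<alpha> t) *\<^sub>R xhat \<alpha> \<phi> epsphi zt C t)
       zprev"

definition lam ::
  "('m::euclidean_space \<Rightarrow> real ^ 3 ^ 'n) \<Rightarrow> real ^ 3 ^ 3 \<Rightarrow> real ^ 'n ^ 'n \<Rightarrow> 'm \<Rightarrow> 'm" where
  "lam \<phi> R P u = inv_into UNIV \<phi> (P ** \<phi> u ** transpose R)"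

definition TP_equivariant ::
  "('m::euclidean_space \<Rightarrow> real ^ 3 ^ 'n) \<Rightarrow> (real ^ 3 ^ 3) set \<Rightarrow> (real ^ 'n ^ 'n) set \<Rightarrow>
   ('m \<Rightarrow> 'm \<Rightarrow> real ^ 'd ^ 'n \<Rightarrow> real) \<Rightarrow> bool" where
  "TP_equivariant \<phi> TT PP p \<longleftrightarrow>
     (\<forall>R\<in>TT. \<forall>P\<in>PP. \<forall>u u' C.
        p (lam \<phi> R P u) (lam \<phi> R P u') (P ** C) = p u u' C)"

end

theory Submission imports Defs begin

text \<open>Conjugating the isometry \<open>X \<mapsto> \<Pi> X R\<^sup>T\<close> of the centred space by \<open>\<phi>\<close> gives
  \<open>\<lambda>\<close>, a linear isometry of \<open>\<real>\<^sup>m\<close>. Equivariance of the denoiser says exactly that \<open>\<lambda>\<close>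
  commutes with \<open>eps_m\<close>, hence with \<open>xhat\<close> and with the means of all transitions, which are
  linear combinations of \<open>z\<close> and \<open>xhat\<close>. An isotropic Gaussian density is invariant under a
  linear isometry applied to both its argument and its mean.\<close>

lemma norm_vec_permute:
  assumes "p permutes (UNIV::'n::finite set)"
  shows "norm (\<chi> i. (x::'a::real_normed_vector^'n) $ p i) = norm x"
  using sum.permute[OF assms, of "\<lambda>i. (norm (x $ i))\<^sup>2"]
  by (simp add: norm_vec_def L2_set_def comp_def)

lemma permutation_matrix_mult:
  "(\<chi> i j. if p i = j then 1 else 0) ** (X::real^'k^'n) = (\<chi> i. X $ p i)"
  by (simp add: vec_eq_iff matrix_matrix_mult_def if_distrib[of "\<lambda>c. c * _"] cong: if_cong)

lemma norm_permutation_matrix_mult: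
  assumes "permutation_matrix P"
  shows "norm (P ** (X::real^'k^'n)) = norm X"
  using assms norm_vec_permute
  by (auto simp: permutation_matrix_def permutation_matrix_mult)

lemma norm_vec_map_isometry:
  assumes "\<And>y. norm (f y) = norm y"
  shows "norm (\<chi> i. f ((x::'a::real_normed_vector^'n) $ i)) = norm x"
  unfolding norm_vec_def[of "\<chi> i. f (x $ i)"] norm_vec_def[of x] by (simp add: assms)

lemma matrix_mult_transpose_rows: "(X::real^'k^'n) ** transpose R = (\<chi> i. R *v (X $ i))"
  by (simp add: vec_eq_iff matrix_matrix_mult_def matrix_vector_mult_def transpose_def mult.commute)

lemma norm_matrix_mult_transpose_orthogonal:
  assumes "orthogonal_matrix (R::real^'k^'k)"
  shows "norm ((X::real^'k^'n) ** transpose R) = norm X"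
proof -
  have "norm (R *v y) = norm y" for y
    using assms by (simp add: orthogonal_transformation_matrix orthogonal_transformation_norm)
  then show ?thesis
    unfolding matrix_mult_transpose_rows by (rule norm_vec_map_isometry)
qed

lemma centred_space_mult_transpose:
  assumes "X \<in> centred_space mt"
  shows "X ** transpose R \<in> centred_space mt"
proof -
  have "(\<Sum>i\<in>UNIV. mt $ i * (X ** transpose R) $ i $ j)
      = (\<Sum>k\<in>UNIV. R $ j $ k * (\<Sum>i\<in>UNIV. mt $ i * X $ i $ k))" for j
    by (simp add: matrix_matrix_mult_def transpose_def sum_distrib_left mult_ac)
       (rule sum.swap)
  with assms show ?thesis
    unfolding centred_space_def by simp
qed

lemma linear_matrix_sandwich: "linear (\<lambda>X::real^'k^'n. A ** X ** B)"
  by (rule linearI)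
     (simp_all add: vec_eq_iff matrix_matrix_mult_def sum.distrib sum_distrib_left algebra_simps)

lemma phi_lam:
  assumes "bij_betw \<phi> UNIV (centred_space mt)" and "P \<in> perm_set mt"
  shows "\<phi> (lam \<phi> R P u) = P ** \<phi> u ** transpose R"
proof -
  have "P ** \<phi> u \<in> centred_space mt"
    using assms by (auto simp: perm_set_def bij_betw_def)
  then have "P ** \<phi> u ** transpose R \<in> range \<phi>"
    using assms(1) centred_space_mult_transpose by (auto simp: bij_betw_def)
  then show ?thesis
    unfolding lam_def by (rule f_inv_into_f)
qed

lemma linear_lam:
  assumes "linear \<phi>" and bij: "bij_betw \<phi> UNIV (centred_space mt)" and P: "P \<in> perm_set mt"
  shows "linear (lam \<phi> R P)"
proof -
  have inj: "inj \<phi>"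
    using bij by (simp add: bij_betw_def)
  have lin: "linear (\<lambda>u. \<phi> (lam \<phi> R P u))"
    unfolding phi_lam[OF bij P]
    using linear_compose[OF assms(1) linear_matrix_sandwich] by (simp add: comp_def)
  show ?thesis
  proof (rule linearI)
    fix x y and c :: real
    show "lam \<phi> R P (x + y) = lam \<phi> R P x + lam \<phi> R P y"
      by (rule injD[OF inj]) (simp add: linear_add[OF lin] linear_add[OF assms(1)])
    show "lam \<phi> R P (c *\<^sub>R x) = c *\<^sub>R lam \<phi> R P x"
      by (rule injD[OF inj]) (simp add: linear_scale[OF lin] linear_scale[OF assms(1)])
  qed
qed

lemma norm_lam:
  assumes "\<forall>u. norm (\<phi> u) = norm u" and "bij_betw \<phi> UNIV (centred_space mt)"
    and "P \<in> perm_set mt" and "orthogonal_matrix R"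
  shows "norm (lam \<phi> R P u) = norm u"
proof -
  have "norm (lam \<phi> R P u) = norm (\<phi> (lam \<phi> R P u))"
    using assms(1) by simp
  also have "\<dots> = norm (P ** \<phi> u ** transpose R)"
    by (simp only: phi_lam[OF assms(2,3)])
  also have "\<dots> = norm (\<phi> u)"
    using assms(3,4) by (simp add: norm_matrix_mult_transpose_orthogonal
        norm_permutation_matrix_mult perm_set_def)
  finally show ?thesis
    using assms(1) by simp
qed

lemma eps_m_lam:
  assumes bij: "bij_betw \<phi> UNIV (centred_space mt)" and P: "P \<in> perm_set mt"
    and eps_closed: "\<forall>X\<in>centred_space mt. epsphi X C t \<in> centred_space mt"
    and eps_equiv: "\<forall>X\<in>centred_space mt.
                      epsphi (P ** X ** transpose R) (P ** C) t = P ** epsphi X C t ** transpose R"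
  shows "eps_m \<phi> epsphi (lam \<phi> R P u) (P ** C) t = lam \<phi> R P (eps_m \<phi> epsphi u C t)"
proof -
  have U: "\<phi> u \<in> centred_space mt" and im: "range \<phi> = centred_space mt"
    using bij by (auto simp: bij_betw_def)
  have "epsphi (\<phi> u) C t \<in> range \<phi>"
    using eps_closed U im by simp
  then have eps_U: "\<phi> (eps_m \<phi> epsphi u C t) = epsphi (\<phi> u) C t"
    unfolding eps_m_def by (rule f_inv_into_f)
  have "eps_m \<phi> epsphi (lam \<phi> R P u) (P ** C) t = inv \<phi> (P ** epsphi (\<phi> u) C t ** transpose R)"
    using eps_equiv U by (simp only: eps_m_def phi_lam[OF bij P])
  also have "\<dots> = lam \<phi> R P (eps_m \<phi> epsphi u C t)"
    unfolding lam_def eps_U ..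
  finally show ?thesis .
qed

lemma xhat_lam:
  assumes "linear \<phi>" and bij: "bij_betw \<phi> UNIV (centred_space mt)" and P: "P \<in> perm_set mt"
    and "\<forall>X\<in>centred_space mt. epsphi X C t \<in> centred_space mt"
    and "\<forall>X\<in>centred_space mt.
           epsphi (P ** X ** transpose R) (P ** C) t = P ** epsphi X C t ** transpose R"
  shows "xhat \<alpha> \<phi> epsphi (lam \<phi> R P u) (P ** C) t = lam \<phi> R P (xhat \<alpha> \<phi> epsphi u C t)"
proof -
  have lin: "linear (lam \<phi> R P)"
    using assms(1) bij P by (rule linear_lam)
  have "eps_m \<phi> epsphi (lam \<phi> R P u) (P ** C) t = lam \<phi> R P (eps_m \<phi> epsphi u C t)"
    by (rule eps_m_lam) (fact assms)+
  then show ?thesis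
    by (simp add: xhat_def linear_diff[OF lin] linear_scale[OF lin])
qed

lemma gauss_dens_linear_isometry:
  fixes f :: "'a::euclidean_space \<Rightarrow> 'a"
  assumes "linear f" and "\<And>y. norm (f y) = norm y"
  shows "gauss_dens v (f \<mu>) (f x) = gauss_dens v \<mu> x"
  using assms by (simp add: gauss_dens_def linear_diff[symmetric])

theorem proposition6:
  fixes mt :: "real ^ 'n"
    and \<phi> :: "'m::euclidean_space \<Rightarrow> real ^ 3 ^ 'n"
    and TT :: "(real ^ 3 ^ 3) set"
    and epsphi :: "real ^ 3 ^ 'n \<Rightarrow> real ^ 'd ^ 'n \<Rightarrow> nat \<Rightarrow> real ^ 3 ^ 'n"
    and \<alpha> :: "nat \<Rightarrow> real"
    and Tmax :: nat
  assumes N2: "CARD('n) \<ge> 2"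
    and mt_pos: "\<forall>i. 0 < mt $ i \<and> mt $ i < 1"
    and mt_sum: "(\<Sum>i\<in>UNIV. mt $ i) = 1"
    and dim_m: "DIM('m) = 3 * (CARD('n) - 1)"
    and phi_lin: "linear \<phi>"
    and phi_iso: "\<forall>u. norm (\<phi> u) = norm u"
    and phi_bij: "bij_betw \<phi> UNIV (centred_space mt)"
    and TT_orth: "\<forall>R\<in>TT. orthogonal_matrix R"
    and alpha_range: "\<forall>t\<le>Tmax. 0 < \<alpha> t \<and> \<alpha> t < 1"
    and eps_range: "\<forall>X\<in>centred_space mt. \<forall>C t. t \<le> Tmax \<longrightarrow> epsphi X C t \<in> centred_space mt"
    and eps_equiv: "\<forall>R\<in>TT. \<forall>P\<in>perm_set mt. \<forall>X\<in>centred_space mt. \<forall>C t. t \<le> Tmax \<longrightarrow>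
                      epsphi (P ** X ** transpose R) (P ** C) t = P ** epsphi X C t ** transpose R"
  shows "(\<forall>t. 1 \<le> t \<and> t \<le> Tmax \<longrightarrow>
            TP_equivariant \<phi> TT (perm_set mt) (p_trans \<alpha> \<phi> epsphi t))
         \<and> TP_equivariant \<phi> TT (perm_set mt) (p_final \<alpha> \<phi> epsphi)"
proof -
  have transition_mean_invariant:
    "gauss_dens v (a *\<^sub>R lam \<phi> R P z + b *\<^sub>R xhat \<alpha> \<phi> epsphi (lam \<phi> R P z) (P ** C) t)
       (lam \<phi> R P x)
     = gauss_dens v (a *\<^sub>R z + b *\<^sub>R xhat \<alpha> \<phi> epsphi z C t) x"
    if R: "R \<in> TT" and P: "P \<in> perm_set mt" and t: "t \<le> Tmax" for R P t v a b x z C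
  proof -
    have lin: "linear (lam \<phi> R P)"
      using phi_lin phi_bij P by (rule linear_lam)
    have iso: "norm (lam \<phi> R P y) = norm y" for y
      using phi_iso phi_bij P TT_orth R by (simp add: norm_lam)
    have "xhat \<alpha> \<phi> epsphi (lam \<phi> R P z) (P ** C) t = lam \<phi> R P (xhat \<alpha> \<phi> epsphi z C t)"
      using phi_lin phi_bij P by (rule xhat_lam) (use eps_range eps_equiv R P t in auto)
    then have "a *\<^sub>R lam \<phi> R P z + b *\<^sub>R xhat \<alpha> \<phi> epsphi (lam \<phi> R P z) (P ** C) t
             = lam \<phi> R P (a *\<^sub>R z + b *\<^sub>R xhat \<alpha> \<phi> epsphi z C t)"
      by (simp add: linear_add[OF lin] linear_scale[OF lin])
    then show ?thesis
      by (simp add: gauss_dens_linear_isometry[OF lin iso])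
  qed
  show ?thesis
    unfolding TP_equivariant_def p_trans_def p_final_def
    using transition_mean_invariant transition_mean_invariant[where a = 0 and b = 1] by auto
qed

end
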